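(* Let $\Omega\subset\mathbb{R}^d$ be a non-empty, bounded, open set and let $\Phi\colon\mathbb{R}^N_+\to[0,\infty)$ satisfy (Φ.3). Then every $1$-adjusted $(1,\Phi)$-eigen-$N$-cluster of $\Omega$ is a $\Phi$-Cheeger $N$-cluster of $\Omega$.
   Context: All sets are Lebesgue measurable; $|E|$ is Lebesgue measure and $P(E)$ the distributional (De Giorgi) perimeter; set inclusions and disjointness are understood up to null sets. For $F\subset\mathbb{R}^d$, $h(F)=\inf\{P(E)/|E| : E\subset F,\ |E|>0\}\in[0,\infty]$. An $N$-set of $F$ is an $N$-tuple $\mathcal E=(\mathcal E_1,\dots,\mathcal E_N)$ with $\mathcal E_i\subset F$, $|\mathcal E_i|>0$, and $|\mathcal E_i\cap\mathcal E_j|=0$ for $i\neq j$; it is an $N$-cluster if moreover $P(\mathcal E_i)<\infty$ for all $i$. For an $N$-set $\mathcal E$ of $F$ let $F^{\mathcal E}_i=\bigcup_{j\ne i}\mathcal E_j$; an $N$-cluster $\mathcal E$ of $F$ is $1$-adjusted if $P(\mathcal E_i)/|\mathcal E_i|=h(F\setminus F^{\mathcal E}_i)$ for every $i$. $\mathbb{R}^N_+=\{v\in\mathbb{R}^N: v_i\ge0\}$ with componentwise order ($v\le w$ iff $v_i\le w_i$ for all $i$). (Φ.3): $v\le w\Rightarrow\Phi(v)\le\Phi(w)$. $H^{\Phi,N}(F)=\inf\{\Phi(P(\mathcal E_1)/|\mathcal E_1|,\dots,P(\mathcal E_N)/|\mathcal E_N|) : \mathcal E \text{ an } N\text{-cluster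 of } F\}$, minimizers being $\Phi$-Cheeger $N$-clusters. $\mathscr{L}^{\Phi,N}_{1,1}(F)=\inf\{\Phi(h(\mathcal E_1),\dots,h(\mathcal E_N)) : \mathcal E \text{ an } N\text{-set of } F\}$; a minimizer which is an $N$-cluster is a $(1,\Phi)$-eigen-$N$-cluster. *)

theory Defs
  imports "HOL-Analysis.Analysis"
begin

definition test_field :: "('a::euclidean_space \<Rightarrow> 'a) \<Rightarrow> bool" where
  "test_field \<phi> \<longleftrightarrow>
     (\<exists>D :: 'a \<Rightarrow> ('a \<Rightarrow>\<^sub>L 'a). (\<forall>x. (\<phi> has_derivative blinfun_apply (D x)) (at x)) \<and> continuous_on UNIV D)
     \<and> compact (closure {x. \<phi> x \<noteq> 0})
     \<and> (\<forall>x. norm (\<phi> x) \<le> 1)"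

definition divergence :: "('a::euclidean_space \<Rightarrow> 'a) \<Rightarrow> 'a \<Rightarrow> real" where
  "divergence \<phi> x = (\<Sum>b\<in>Basis. frechet_derivative \<phi> (at x) b \<bullet> b)"

definition perimeter :: "'a::euclidean_space set \<Rightarrow> ereal" where
  "perimeter E = (SUP \<phi>\<in>{\<phi>. test_field \<phi>}. ereal (set_lebesgue_integral lebesgue E (divergence \<phi>)))"

definition pratio :: "'a::euclidean_space set \<Rightarrow> ereal" where
  "pratio E = perimeter E / enn2ereal (emeasure lebesgue E)"

definition cheeger_h :: "'a::euclidean_space set \<Rightarrow> ereal" where
  "cheeger_h F = Inf {pratio E | E. E \<in> sets lebesgue \<and> E - F \<in> null_sets lebesgue \<and> emeasure lebesgue E > 0}"

definition N_set :: "'a::euclidean_space set \<Rightarrow> ('n::finite \<Rightarrow> 'a set) \<Rightarrow> bool" where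
  "N_set F \<E> \<longleftrightarrow>
     (\<forall>i. \<E> i \<in> sets lebesgue \<and> \<E> i - F \<in> null_sets lebesgue \<and> emeasure lebesgue (\<E> i) > 0)
     \<and> (\<forall>i j. i \<noteq> j \<longrightarrow> \<E> i \<inter> \<E> j \<in> null_sets lebesgue)"

definition N_cluster :: "'a::euclidean_space set \<Rightarrow> ('n::finite \<Rightarrow> 'a set) \<Rightarrow> bool" where
  "N_cluster F \<E> \<longleftrightarrow> N_set F \<E> \<and> (\<forall>i. perimeter (\<E> i) < \<infinity>)"

definition others :: "('n \<Rightarrow> 'a set) \<Rightarrow> 'n \<Rightarrow> 'a set" where
  "others \<E> i = (\<Union>j\<in>{j. j \<noteq> i}. \<E> j)"

definition one_adjusted :: "'a::euclidean_space set \<Rightarrow> ('n::finite \<Rightarrow> 'a set) \<Rightarrow> bool" where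
  "one_adjusted F \<E> \<longleftrightarrow> N_cluster F \<E> \<and> (\<forall>i. pratio (\<E> i) = cheeger_h (F - others \<E> i))"

text \<open>Evaluation of \<Phi> : R^N_+ \<rightarrow> [0,\<infinity>) at a vector of extended reals; the value is \<infinity>
  as soon as one component is \<infinity> (only relevant for N-sets with some h(E_i) = \<infinity>).\<close>
definition Phi_ext :: "(real^'n \<Rightarrow> real) \<Rightarrow> (ereal^'n::finite) \<Rightarrow> ereal" where
  "Phi_ext \<Phi> v = (if (\<forall>i. v $ i < \<infinity>) then ereal (\<Phi> (\<chi> i. real_of_ereal (v $ i))) else \<infinity>)"

definition H_Phi :: "(real^'n::finite \<Rightarrow> real) \<Rightarrow> 'a::euclidean_space set \<Rightarrow> ereal" where
  "H_Phi \<Phi> F = Inf {Phi_ext \<Phi> (\<chi> i. pratio (\<E> i)) | \<E>. N_cluster F (\<E> :: 'n \<Rightarrow> 'a set)}"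

definition Phi_Cheeger_cluster :: "(real^'n::finite \<Rightarrow> real) \<Rightarrow> 'a::euclidean_space set \<Rightarrow> ('n \<Rightarrow> 'a set) \<Rightarrow> bool" where
  "Phi_Cheeger_cluster \<Phi> F \<E> \<longleftrightarrow> N_cluster F \<E> \<and> Phi_ext \<Phi> (\<chi> i. pratio (\<E> i)) = H_Phi \<Phi> F"

definition L_Phi :: "(real^'n::finite \<Rightarrow> real) \<Rightarrow> 'a::euclidean_space set \<Rightarrow> ereal" where
  "L_Phi \<Phi> F = Inf {Phi_ext \<Phi> (\<chi> i. cheeger_h (\<E> i)) | \<E>. N_set F (\<E> :: 'n \<Rightarrow> 'a set)}"

definition eigen_cluster :: "(real^'n::finite \<Rightarrow> real) \<Rightarrow> 'a::euclidean_space set \<Rightarrow> ('n \<Rightarrow> 'a set) \<Rightarrow> bool" where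
  "eigen_cluster \<Phi> F \<E> \<longleftrightarrow> N_cluster F \<E> \<and> Phi_ext \<Phi> (\<chi> i. cheeger_h (\<E> i)) = L_Phi \<Phi> F"

definition Phi_monotone :: "(real^'n::finite \<Rightarrow> real) \<Rightarrow> bool" where
  "Phi_monotone \<Phi> \<longleftrightarrow> (\<forall>v w. (\<forall>i. 0 \<le> v $ i) \<and> (\<forall>i. v $ i \<le> w $ i) \<longrightarrow> \<Phi> v \<le> \<Phi> w)"

end

theory Submission
  imports Defs
begin

text \<open>Since every chamber satisfies h(E_i) \<le> P(E_i)/|E_i|, monotonicity of \<Phi> gives
  the comparison of the two minimisation problems L \<le> H. For a 1-adjusted cluster, E_i lies in
  the complement of the other chambers, so the antitonicity of h upgrades that inequality to an
  equality chamber by chamber; hence its H-energy equals its L-energy, which is minimal by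
  assumption.\<close>

lemma test_field_zero: "test_field (\<lambda>x::'a::euclidean_space. 0::'a)"
  unfolding test_field_def
  by (rule conjI, rule exI[of _ "\<lambda>x. 0"]) (auto simp: zero_blinfun.rep_eq)

lemma perimeter_nonneg: "0 \<le> perimeter (E::'a::euclidean_space set)"
proof -
  have "divergence (\<lambda>x::'a. 0::'a) = (\<lambda>x. 0)"
    by (auto simp: divergence_def fun_eq_iff)
  then have "ereal (set_lebesgue_integral lebesgue E (divergence (\<lambda>x::'a. 0::'a))) = 0"
    by (simp add: set_lebesgue_integral_def)
  moreover have "ereal (set_lebesgue_integral lebesgue E (divergence (\<lambda>x::'a. 0::'a))) \<le> perimeter E"
    unfolding perimeter_def by (rule SUP_upper) (simp add: test_field_zero)
  ultimately show ?thesis by (metis zero_ereal_def)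
qed

lemma pratio_nonneg: "0 \<le> pratio (E::'a::euclidean_space set)"
  unfolding pratio_def using perimeter_nonneg[of E]
  by (simp add: divide_ereal_def ereal_inverse_nonneg_iff)

lemma cheeger_h_nonneg: "0 \<le> cheeger_h (F::'a::euclidean_space set)"
  unfolding cheeger_h_def by (rule Inf_greatest) (auto simp: pratio_nonneg)

lemma cheeger_h_le_pratio:
  assumes "E \<in> sets lebesgue" "emeasure lebesgue E > 0"
  shows "cheeger_h (E::'a::euclidean_space set) \<le> pratio E"
  unfolding cheeger_h_def by (rule Inf_lower) (use assms in auto)

lemma cheeger_h_antimono_ae:
  assumes "E - F \<in> null_sets lebesgue"
  shows "cheeger_h (F::'a::euclidean_space set) \<le> cheeger_h E"
  unfolding cheeger_h_def
proof (rule Inf_mono)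
  fix b
  assume "b \<in> {pratio G |G. G \<in> sets lebesgue \<and> G - E \<in> null_sets lebesgue \<and> 0 < emeasure lebesgue G}"
  then obtain G where G: "b = pratio G" "G \<in> sets lebesgue" "G - E \<in> null_sets lebesgue"
      "0 < emeasure lebesgue G"
    by auto
  have "G - F \<subseteq> (G - E) \<union> (E - F)" by auto
  moreover have "(G - E) \<union> (E - F) \<in> null_sets lebesgue" using G assms by auto
  ultimately have "G - F \<in> null_sets lebesgue" by (meson null_sets_completion_subset)
  then show "\<exists>a\<in>{pratio G |G. G \<in> sets lebesgue \<and> G - F \<in> null_sets lebesgue \<and> 0 < emeasure lebesgue G}. a \<le> b"
    using G by blast
qed

lemma Phi_ext_mono:
  assumes mono: "Phi_monotone \<Phi>" and nonneg: "\<forall>i. 0 \<le> v $ i" and le: "\<forall>i. v $ i \<le> w $ i"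
  shows "Phi_ext \<Phi> v \<le> Phi_ext \<Phi> w"
proof (cases "\<forall>i. w $ i < \<infinity>")
  case True
  then have v_finite: "\<forall>i. v $ i < \<infinity>" using le by (meson le_less_trans)
  have "\<Phi> (\<chi> i. real_of_ereal (v $ i)) \<le> \<Phi> (\<chi> i. real_of_ereal (w $ i))"
  proof (rule mono[unfolded Phi_monotone_def, rule_format], rule conjI)
    show "\<forall>i. 0 \<le> (\<chi> i. real_of_ereal (v $ i)) $ i"
      using nonneg by (auto intro!: real_of_ereal_pos)
    show "\<forall>i. (\<chi> i. real_of_ereal (v $ i)) $ i \<le> (\<chi> i. real_of_ereal (w $ i)) $ i"
      using nonneg le True by (auto intro!: real_of_ereal_positive_mono)
  qed
  then show ?thesis using True v_finite by (simp add: Phi_ext_def)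
next
  case False
  then show ?thesis by (auto simp: Phi_ext_def)
qed

lemma N_set_ae_subset_diff_others:
  assumes "N_set F \<E>"
  shows "\<E> i - (F - others \<E> i) \<in> null_sets lebesgue"
proof -
  have "\<E> i - (F - others \<E> i) \<subseteq> (\<E> i - F) \<union> (\<Union>j\<in>{j. j \<noteq> i}. \<E> i \<inter> \<E> j)"
    by (auto simp: others_def)
  moreover have "(\<E> i - F) \<union> (\<Union>j\<in>{j. j \<noteq> i}. \<E> i \<inter> \<E> j) \<in> null_sets lebesgue"
    using assms unfolding N_set_def by (intro null_sets.Un null_sets_UN') auto
  ultimately show ?thesis by (meson null_sets_completion_subset)
qed

lemma one_adjusted_cheeger_h_eq_pratio:
  assumes "one_adjusted F \<E>"
  shows "cheeger_h (\<E> i) = pratio (\<E> i)"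
proof (rule antisym)
  have "N_set F \<E>" using assms by (simp add: one_adjusted_def N_cluster_def)
  then show "cheeger_h (\<E> i) \<le> pratio (\<E> i)"
    unfolding N_set_def by (intro cheeger_h_le_pratio) blast+
  have "cheeger_h (F - others \<E> i) \<le> cheeger_h (\<E> i)"
    using \<open>N_set F \<E>\<close> by (intro cheeger_h_antimono_ae N_set_ae_subset_diff_others)
  then show "pratio (\<E> i) \<le> cheeger_h (\<E> i)"
    using assms by (simp add: one_adjusted_def)
qed

lemma L_Phi_le_H_Phi:
  fixes \<Phi> :: "real^'n::finite \<Rightarrow> real" and F :: "'a::euclidean_space set"
  assumes "Phi_monotone \<Phi>"
  shows "L_Phi \<Phi> F \<le> H_Phi \<Phi> F"
  unfolding H_Phi_def
proof (rule Inf_greatest)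
  fix x
  assume "x \<in> {Phi_ext \<Phi> (\<chi> i. pratio (\<F> i)) | \<F>. N_cluster F (\<F> :: 'n \<Rightarrow> 'a set)}"
  then obtain \<F> :: "'n \<Rightarrow> 'a set"
    where x: "x = Phi_ext \<Phi> (\<chi> i. pratio (\<F> i))" and "N_set F \<F>"
    by (auto simp: N_cluster_def)
  have "L_Phi \<Phi> F \<le> Phi_ext \<Phi> (\<chi> i. cheeger_h (\<F> i))"
    unfolding L_Phi_def by (rule Inf_lower) (use \<open>N_set F \<F>\<close> in auto)
  also have "\<dots> \<le> x"
    unfolding x using \<open>N_set F \<F>\<close>
    by (intro Phi_ext_mono assms)
       (auto simp: cheeger_h_nonneg N_set_def intro!: cheeger_h_le_pratio)
  finally show "L_Phi \<Phi> F \<le> x" .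
qed

lemma H_Phi_le_cluster_energy:
  fixes \<Phi> :: "real^'n::finite \<Rightarrow> real" and \<E> :: "'n \<Rightarrow> 'a::euclidean_space set"
  assumes "N_cluster F \<E>"
  shows "H_Phi \<Phi> F \<le> Phi_ext \<Phi> (\<chi> i. pratio (\<E> i))"
  unfolding H_Phi_def by (rule Inf_lower) (use assms in auto)

theorem mainTheorem2:
  fixes \<Omega> :: "'a::euclidean_space set"
    and \<Phi> :: "real^'n::finite \<Rightarrow> real"
    and \<E> :: "'n \<Rightarrow> 'a set"
  assumes "open \<Omega>" and "bounded \<Omega>" and "\<Omega> \<noteq> {}"
    and "\<forall>v. (\<forall>i. 0 \<le> v $ i) \<longrightarrow> 0 \<le> \<Phi> v"
    and "Phi_monotone \<Phi>"
    and "one_adjusted \<Omega> \<E>"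
    and "eigen_cluster \<Phi> \<Omega> \<E>"
  shows "Phi_Cheeger_cluster \<Phi> \<Omega> \<E>"
proof -
  have cluster: "N_cluster \<Omega> \<E>" using assms(6) by (simp add: one_adjusted_def)
  have "Phi_ext \<Phi> (\<chi> i. pratio (\<E> i)) = Phi_ext \<Phi> (\<chi> i. cheeger_h (\<E> i))"
    using one_adjusted_cheeger_h_eq_pratio[OF assms(6)] by simp
  also have "\<dots> = L_Phi \<Phi> \<Omega>" using assms(7) by (simp add: eigen_cluster_def)
  also have "\<dots> \<le> H_Phi \<Phi> \<Omega>" using assms(5) by (rule L_Phi_le_H_Phi)
  finally have "Phi_ext \<Phi> (\<chi> i. pratio (\<E> i)) \<le> H_Phi \<Phi> \<Omega>" .
  with H_Phi_le_cluster_energy[OF cluster] cluster show ?thesis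
    unfolding Phi_Cheeger_cluster_def by (blast intro: antisym)
qed

end
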